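(* Let $s\ge1$, $n=2s$, and let $A$ be the $n\times n$ matrix with $A_{ij}=1$ if $|i-j|\le s-1$ and $0$ otherwise. Let $D$ be the $s\times s$ matrix with $D_{ij}=1$ if $i+j\le s+1$ and $D_{ij}=2$ if $i+j>s+1$, and let $P$ be the $s\times s$ permutation matrix with $P_{ij}=1$ iff $i+j=s+1$. If $x$ is any eigenvector of $D$ with eigenvalue $\lambda$ and $y=\begin{bmatrix}x\\ Px\end{bmatrix}\in\mathbb R^{n}$, then $Ay=\lambda y$. *)

theory Defs
  imports "Jordan_Normal_Form.Char_Poly"
begin

text \<open>Matrices use 0-based indices; a paper index i (1-based) corresponds to i-1 here.\<close>

definition bandA :: "nat \<Rightarrow> real mat" where
  "bandA s = mat (2*s) (2*s) (\<lambda>(i,j). if nat \<bar>int i - int j\<bar> \<le> s - 1 then 1 else 0)"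

definition matD :: "nat \<Rightarrow> real mat" where
  "matD s = mat s s (\<lambda>(i,j). if (i+1) + (j+1) \<le> s + 1 then 1 else 2)"

definition permP :: "nat \<Rightarrow> real mat" where
  "permP s = mat s s (\<lambda>(i,j). if (i+1) + (j+1) = s + 1 then 1 else 0)"

end

theory Submission
  imports Defs
begin

text \<open>Both the band matrix A and the vector y = [x; P x] are invariant under the
  reflection k \<mapsto> 2s-1-k of indices. Folding the sum defining a row of A y along this
  reflection turns the first s rows into D x, because the two halves of an upper row of A add
  up to the corresponding row of D; the lower rows are then the reflected upper rows.\<close>

lemma mult_mat_vec_nth_sum:
  assumes "A \<in> carrier_mat n m" "dim_vec y = m" "i < n"
  shows "(A *\<^sub>v y) $ i = (\<Sum>j<m. A $$ (i, j) * y $ j)"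
  using assms by (simp add: scalar_prod_def lessThan_atLeast0)

lemma sum_lessThan_double_reflect:
  fixes g :: "nat \<Rightarrow> 'a::comm_monoid_add"
  shows "(\<Sum>j<2*s. g j) = (\<Sum>j<s. g j + g (2*s-1-j))"
proof -
  have "(\<Sum>j<2*s. g j) = (\<Sum>j<s. g j) + (\<Sum>j\<in>{s..<2*s}. g j)"
    by (simp add: lessThan_atLeast0 sum.atLeastLessThan_concat)
  also have "(\<Sum>j\<in>{s..<2*s}. g j) = (\<Sum>j<s. g (2*s-1-j))"
    by (rule sum.reindex_bij_witness[where i="\<lambda>j. 2*s-1-j" and j="\<lambda>j. 2*s-1-j"]) auto
  finally show ?thesis by (simp add: sum.distrib)
qed

lemma mult_mat_vec_reflect:
  fixes A :: "'a::comm_semiring_0 mat"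
  assumes A: "A \<in> carrier_mat n n" and y: "dim_vec y = n" and i: "i < n"
    and A_reflect: "\<And>i j. i < n \<Longrightarrow> j < n \<Longrightarrow> A $$ (n-1-i, n-1-j) = A $$ (i, j)"
    and y_reflect: "\<And>j. j < n \<Longrightarrow> y $ (n-1-j) = y $ j"
  shows "(A *\<^sub>v y) $ (n-1-i) = (A *\<^sub>v y) $ i"
proof -
  have "(A *\<^sub>v y) $ (n-1-i) = (\<Sum>j<n. A $$ (n-1-i, j) * y $ j)"
    using i by (intro mult_mat_vec_nth_sum[OF A y]) simp
  also have "\<dots> = (\<Sum>j<n. A $$ (n-1-i, n-1-j) * y $ (n-1-j))"
    by (rule sum.reindex_bij_witness[where i="\<lambda>j. n-1-j" and j="\<lambda>j. n-1-j"]) auto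
  also have "\<dots> = (\<Sum>j<n. A $$ (i, j) * y $ j)"
  proof (rule sum.cong[OF refl])
    fix j assume "j \<in> {..<n}"
    then show "A $$ (n-1-i, n-1-j) * y $ (n-1-j) = A $$ (i, j) * y $ j"
      using A_reflect[OF i, of j] y_reflect[of j] by simp
  qed
  also have "\<dots> = (A *\<^sub>v y) $ i"
    using i by (rule mult_mat_vec_nth_sum[OF A y, symmetric])
  finally show ?thesis .
qed

lemma bandA_carrier: "bandA s \<in> carrier_mat (2*s) (2*s)"
  by (simp add: bandA_def)

lemma bandA_reflect:
  assumes "i < 2*s" "j < 2*s"
  shows "bandA s $$ (2*s-1-i, 2*s-1-j) = bandA s $$ (i, j)"
proof -
  have "nat \<bar>int (2*s-1-i) - int (2*s-1-j)\<bar> = nat \<bar>int i - int j\<bar>"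
    using assms by linarith
  with assms show ?thesis by (simp add: bandA_def)
qed

lemma bandA_fold_eq_matD:
  assumes "i < s" "j < s"
  shows "bandA s $$ (i, j) + bandA s $$ (i, 2*s-1-j) = matD s $$ (i, j)"
proof -
  have "nat \<bar>int i - int j\<bar> \<le> s - 1" using assms by linarith
  moreover have "nat \<bar>int i - int (2*s-1-j)\<bar> \<le> s - 1 \<longleftrightarrow> \<not> (i+1) + (j+1) \<le> s + 1"
    using assms by linarith
  ultimately show ?thesis using assms by (simp add: bandA_def matD_def)
qed

lemma mult_mat_vec_permP_nth:
  assumes "x \<in> carrier_vec s" "i < s"
  shows "(permP s *\<^sub>v x) $ i = x $ (s-1-i)"
proof -
  have "(permP s *\<^sub>v x) $ i = (\<Sum>j<s. permP s $$ (i, j) * x $ j)"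
    using assms by (intro mult_mat_vec_nth_sum) (simp_all add: permP_def)
  also have "\<dots> = (\<Sum>j\<in>{s-1-i}. x $ j)"
    using assms(2) by (intro sum.mono_neutral_cong_right) (auto simp: permP_def)
  finally show ?thesis by simp
qed

lemma append_permP_nth:
  assumes "x \<in> carrier_vec s" "k < s"
  shows "(x @\<^sub>v (permP s *\<^sub>v x)) $ k = x $ k"
  using assms by (simp add: permP_def)

lemma append_permP_nth_reflect:
  assumes x: "x \<in> carrier_vec s" and k: "k < s"
  shows "(x @\<^sub>v (permP s *\<^sub>v x)) $ (2*s-1-k) = x $ k"
proof -
  have "\<not> 2*s-1-k < s" "2*s-1-k - s = s-1-k" "s-1-(s-1-k) = k" "s-1-k < s"
    using k by arith+
  then show ?thesis
    using x mult_mat_vec_permP_nth[OF x \<open>s-1-k < s\<close>] by (simp add: permP_def)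
qed

lemma append_permP_reflect:
  assumes x: "x \<in> carrier_vec s" and k: "k < 2*s"
  shows "(x @\<^sub>v (permP s *\<^sub>v x)) $ (2*s-1-k) = (x @\<^sub>v (permP s *\<^sub>v x)) $ k"
proof (cases "k < s")
  case True
  then show ?thesis using append_permP_nth[OF x] append_permP_nth_reflect[OF x] by simp
next
  case False
  then have "2*s-1-k < s" "2*s-1-(2*s-1-k) = k" using k by arith+
  then show ?thesis
    using append_permP_nth[OF x] append_permP_nth_reflect[OF x, of "2*s-1-k"] by simp
qed

lemma bandA_mult_append_permP_reflect:
  assumes x: "x \<in> carrier_vec s" and i: "i < 2*s"
  shows "(bandA s *\<^sub>v (x @\<^sub>v (permP s *\<^sub>v x))) $ (2*s-1-i)
    = (bandA s *\<^sub>v (x @\<^sub>v (permP s *\<^sub>v x))) $ i"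
proof -
  have "dim_vec (x @\<^sub>v (permP s *\<^sub>v x)) = 2*s"
    using x by (simp add: permP_def)
  then show ?thesis
    by (rule mult_mat_vec_reflect[OF bandA_carrier _ i])
      (simp_all only: bandA_reflect append_permP_reflect[OF x])
qed

lemma bandA_mult_append_permP_upper:
  assumes x: "x \<in> carrier_vec s" and i: "i < s"
  shows "(bandA s *\<^sub>v (x @\<^sub>v (permP s *\<^sub>v x))) $ i = (matD s *\<^sub>v x) $ i"
proof -
  let ?y = "x @\<^sub>v (permP s *\<^sub>v x)"
  have "(bandA s *\<^sub>v ?y) $ i = (\<Sum>j<2*s. bandA s $$ (i, j) * ?y $ j)"
    using x i by (intro mult_mat_vec_nth_sum[OF bandA_carrier]) (simp_all add: permP_def)
  also have "\<dots> = (\<Sum>j<s. bandA s $$ (i, j) * ?y $ j + bandA s $$ (i, 2*s-1-j) * ?y $ (2*s-1-j))"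
    by (rule sum_lessThan_double_reflect)
  also have "\<dots> = (\<Sum>j<s. matD s $$ (i, j) * x $ j)"
  proof (rule sum.cong[OF refl])
    fix j assume "j \<in> {..<s}"
    then have "?y $ (2*s-1-j) = x $ j" "?y $ j = x $ j"
      using append_permP_nth_reflect[OF x] append_permP_nth[OF x] by simp_all
    then show "bandA s $$ (i, j) * ?y $ j + bandA s $$ (i, 2*s-1-j) * ?y $ (2*s-1-j)
        = matD s $$ (i, j) * x $ j"
      using i \<open>j \<in> {..<s}\<close> by (simp add: bandA_fold_eq_matD[symmetric] distrib_right)
  qed
  also have "\<dots> = (matD s *\<^sub>v x) $ i"
    using x i by (intro mult_mat_vec_nth_sum[of "matD s" s s, symmetric]) (simp_all add: matD_def)
  finally show ?thesis .
qed

theorem lemma13: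
  fixes s :: nat and x :: "real vec" and lam :: real
  assumes "s \<ge> 1"
    and "eigenvector (matD s) x lam"
  shows "bandA s *\<^sub>v (x @\<^sub>v (permP s *\<^sub>v x)) = lam \<cdot>\<^sub>v (x @\<^sub>v (permP s *\<^sub>v x))"
proof -
  define y where "y = x @\<^sub>v (permP s *\<^sub>v x)"
  have x: "x \<in> carrier_vec s" and ev: "matD s *\<^sub>v x = lam \<cdot>\<^sub>v x"
    using assms(2) by (auto simp: eigenvector_def matD_def)
  have upper: "(bandA s *\<^sub>v y) $ i = lam * y $ i" if i: "i < s" for i
    using bandA_mult_append_permP_upper[OF x i] append_permP_nth[OF x i] x i
    by (simp add: ev y_def)
  have "(bandA s *\<^sub>v y) $ i = lam * y $ i" if i: "i < 2*s" for i
  proof (cases "i < s")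
    case False
    then have "2*s-1-i < s" using i by arith
    then show ?thesis
      using upper[of "2*s-1-i"] append_permP_reflect[OF x i]
        bandA_mult_append_permP_reflect[OF x i] by (simp add: y_def)
  qed (use upper in simp)
  moreover have "dim_vec y = 2*s"
    using x by (simp add: y_def permP_def)
  ultimately show ?thesis
    by (intro eq_vecI) (simp_all add: bandA_def flip: y_def)
qed

end
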